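(* Let $N_1,N_2,N_3,K$ be dyadic with $N_1\sim N_2\gg N_3$ and $K\ll N_1$, let $\phi_1,\phi_2,\phi_3\in L^2(\mathbb{T})$ satisfy $\mathrm{supp}\,\hat\phi_j\subset\mathcal{I}_{N_j}$, and let $0<\delta\lesssim N_1^{-1}$. Then \[ \big\|HP_{\le K}\big(e^{it\partial_x^2}\phi_1\,\overline{e^{it\partial_x^2}\phi_2}\big)\,e^{it\partial_x^2}\phi_3\big\|_{L^2([0,\delta];L^2(\mathbb{T}))}\lesssim\Big(\frac{K}{N_1}\Big)^{1/2}\|\phi_1\|_{L^2}\|\phi_2\|_{L^2}\|\phi_3\|_{L^2}. \] The same estimate holds if $e^{it\partial_x^2}\phi_3$ is replaced by $\overline{e^{it\partial_x^2}\phi_3}$, and also if $H$ is replaced by any Fourier multiplier with bounded symbol.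
   Context: $\mathbb{T}=\mathbb{R}/2\pi\mathbb{Z}$; $\hat\phi(n)$ are Fourier coefficients. $H$ is the Hilbert transformation (Fourier multiplier $-i\,\mathrm{sgn}(\xi)$). Fix $\eta\in C_0^\infty(\mathbb{R})$ even, monotone on $[0,\infty)$, with $\chi_{[-4/3,4/3]}\le\eta\le\chi_{[-5/3,5/3]}$; $P_{\le K}$ is the Fourier multiplier with symbol $\eta(\xi/K)$. Dyadic numbers range over $\{1,2,4,\dots\}$; $\mathcal{I}_1=[-2,2]$, $\mathcal{I}_N=[-2N,2N]\setminus(-N/2,N/2)$ for $N\ge2$. $A\sim B$ means $C^{-1}B\le A\le CB$ and $A\gg B$ means $A\ge C_0B$ for suitable absolute constants; $\lesssim$ hides constants depending only on these. *)

theory Defs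
  imports "HOL-Analysis.Analysis"
begin

definition dyadic :: "real \<Rightarrow> bool" where
  "dyadic N \<longleftrightarrow> (\<exists>k::nat. N = 2 ^ k)"

definition annulus :: "real \<Rightarrow> int set" where
  "annulus N = (if N = 1 then {n. \<bar>real_of_int n\<bar> \<le> 2}
                else {n. \<bar>real_of_int n\<bar> \<le> 2 * N \<and> N / 2 \<le> \<bar>real_of_int n\<bar>})"

text \<open>Trigonometric polynomial on T = R/2piZ with (finitely supported) Fourier coefficients c:
  phi(x) = sum_n c(n) e^{inx}.\<close>
definition trig_poly :: "(int \<Rightarrow> complex) \<Rightarrow> real \<Rightarrow> complex" where
  "trig_poly c x = (\<Sum>n\<in>{n. c n \<noteq> 0}. c n * exp (\<i> * of_int n * of_real x))"

text \<open>Linear Schroedinger evolution e^{it d_x^2} (symbol e^{-i t n^2}) of the trigonometric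
  polynomial with coefficients c.\<close>
definition schr :: "(int \<Rightarrow> complex) \<Rightarrow> real \<Rightarrow> real \<Rightarrow> complex" where
  "schr c t = trig_poly (\<lambda>n. exp (- \<i> * of_real t * of_int (n^2)) * c n)"

definition fcoef :: "(real \<Rightarrow> complex) \<Rightarrow> int \<Rightarrow> complex" where
  "fcoef f m = (1 / (2 * pi)) * integral {0..2*pi} (\<lambda>x. f x * exp (- \<i> * of_int m * of_real x))"

definition fmult :: "(int \<Rightarrow> complex) \<Rightarrow> (real \<Rightarrow> complex) \<Rightarrow> real \<Rightarrow> complex" where
  "fmult \<sigma> f x = (\<Sum>\<^sub>\<infinity>m\<in>UNIV. \<sigma> m * fcoef f m * exp (\<i> * of_int m * of_real x))"

definition hilbert_symbol :: "int \<Rightarrow> complex" where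
  "hilbert_symbol m = - \<i> * of_int (sgn m)"

definition lp_symbol :: "(real \<Rightarrow> real) \<Rightarrow> real \<Rightarrow> int \<Rightarrow> complex" where
  "lp_symbol \<eta> K m = complex_of_real (\<eta> (real_of_int m / K))"

definition l2T :: "(real \<Rightarrow> complex) \<Rightarrow> real" where
  "l2T f = sqrt (integral {0..2*pi} (\<lambda>x. (cmod (f x))\<^sup>2))"

definition l2l2 :: "real \<Rightarrow> (real \<Rightarrow> real \<Rightarrow> complex) \<Rightarrow> real" where
  "l2l2 \<delta> F = sqrt (integral {0..\<delta>} (\<lambda>t. integral {0..2*pi} (\<lambda>x. (cmod (F t x))\<^sup>2)))"

definition trilin :: "(int \<Rightarrow> complex) \<Rightarrow> (real \<Rightarrow> real) \<Rightarrow> real \<Rightarrow> bool \<Rightarrow>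
    (int \<Rightarrow> complex) \<Rightarrow> (int \<Rightarrow> complex) \<Rightarrow> (int \<Rightarrow> complex) \<Rightarrow> real \<Rightarrow> real \<Rightarrow> complex" where
  "trilin \<sigma> \<eta> K cj c1 c2 c3 t x =
     fmult \<sigma> (fmult (lp_symbol \<eta> K) (\<lambda>y. schr c1 t y * cnj (schr c2 t y))) x
     * (if cj then cnj (schr c3 t x) else schr c3 t x)"

end

(*
  Expanding the three free evolutions in Fourier modes writes the trilinear expression as an
  exponential sum over mode triples, with spatial frequency n1 - n2 +- n3 and a time oscillation
  given by the resonance n1^2 - n2^2 +- n3^2. Plancherel in x turns the squared space-time norm
  into a sum over pairs of triples with equal spatial frequency. The time integral over
  [0, delta], delta <= L = B/N1, of the resulting nonnegative trigonometric polynomial is bounded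
  by averaging over shifted windows, which assigns to a pair the weight min(L^2, 1/omega^2) of its
  time frequency omega. After AM-GM, for fixed outer modes the time frequencies along the
  remaining low frequency m' are N2/2-separated (as |n2| >= N2/2 dominates N3 and K), so their
  weights sum to O(L^2 + 1/N2^2) = O(1/N1^2); the O(K) values of the other low frequency and the
  factor 1/L = N1/B then give the bound K/N1.
*)
theory Submission
  imports Defs
begin

lemma has_integral_Re_of_real:
  assumes "((\<lambda>x. complex_of_real (f x)) has_integral I) S"
  shows "(f has_integral Re I) S"
  using has_integral_linear[OF assms bounded_linear_Re] by (simp add: o_def)

section \<open>Integrals of exponentials and exponential sums\<close>

definition exp_ivl_integral :: "real \<Rightarrow> real \<Rightarrow> real \<Rightarrow> complex" where
  "exp_ivl_integral a b \<omega> = (if \<omega> = 0 then complex_of_real (b - a)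
     else (exp (\<i> * of_real \<omega> * of_real b) - exp (\<i> * of_real \<omega> * of_real a)) / (\<i> * of_real \<omega>))"

lemma has_integral_exp_ivl:
  assumes "a \<le> b"
  shows "((\<lambda>t. exp (\<i> * of_real \<omega> * of_real t)) has_integral exp_ivl_integral a b \<omega>) {a..b}"
proof (cases "\<omega> = 0")
  case True
  then show ?thesis using has_integral_const_real[of "1::complex" a b] assms
    by (simp add: exp_ivl_integral_def scaleR_conv_of_real)
next
  case False
  let ?g = "\<lambda>z::complex. exp (\<i> * of_real \<omega> * z) / (\<i> * of_real \<omega>)"
  have "(?g has_field_derivative exp (\<i> * of_real \<omega> * z)) (at z)" for z
    using False by (auto intro!: derivative_eq_intros simp: field_simps)
  then have "((\<lambda>t. exp (\<i> * of_real \<omega> * of_real t)) has_integral (?g (of_real b) - ?g (of_real a))) {a..b}"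
    by (intro fundamental_theorem_of_calculus[OF assms] has_vector_derivative_real_field)
  then show ?thesis unfolding exp_ivl_integral_def if_not_P[OF False] diff_divide_distrib .
qed

lemma norm_exp_ivl_integral_le_length:
  assumes "a \<le> b"
  shows "cmod (exp_ivl_integral a b \<omega>) \<le> b - a"
proof -
  have "cmod (exp_ivl_integral a b \<omega>) \<le> 1 * Henstock_Kurzweil_Integration.content (cbox a b)"
    by (rule has_integral_bound[of 1 "\<lambda>t. exp (\<i> * of_real \<omega> * of_real t)"])
       (use has_integral_exp_ivl[OF assms, of \<omega>] in \<open>auto simp: norm_exp_i_times[symmetric]\<close>)
  then show ?thesis using assms by simp
qed

lemma norm_exp_ivl_integral_le_inverse:
  assumes "\<omega> \<noteq> 0"
  shows "cmod (exp_ivl_integral a b \<omega>) \<le> 2 / \<bar>\<omega>\<bar>"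
proof -
  have "cmod (exp (\<i> * of_real \<omega> * of_real b) - exp (\<i> * of_real \<omega> * of_real a)) \<le> 2"
    using norm_triangle_ineq4[of "exp (\<i> * of_real \<omega> * of_real b)" "exp (\<i> * of_real \<omega> * of_real a)"]
    by (simp add: norm_exp_eq_Re)
  moreover have "cmod (\<i> * of_real \<omega>) = \<bar>\<omega>\<bar>" by (simp add: norm_mult)
  ultimately show ?thesis using assms
    by (simp add: exp_ivl_integral_def norm_divide divide_right_mono)
qed

lemma exp_ivl_integral_shift:
  "exp_ivl_integral s (s + c) \<omega> = exp (\<i> * of_real \<omega> * of_real s) * exp_ivl_integral 0 c \<omega>"
  by (simp add: exp_ivl_integral_def distrib_left exp_add right_diff_distrib)

lemma has_integral_exp_int_period:
  "((\<lambda>x. exp (\<i> * of_int k * of_real x)) has_integral (if k = 0 then complex_of_real (2*pi) else 0)) {0..2*pi}"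
proof -
  have "exp (\<i> * of_real (of_int k) * of_real (2*pi)) = cis (2 * pi * of_int k)"
    by (simp add: cis_conv_exp mult_ac)
  then have "exp_ivl_integral 0 (2*pi) (of_int k) = (if k = 0 then complex_of_real (2*pi) else 0)"
    by (simp add: exp_ivl_integral_def)
  with has_integral_exp_ivl[of 0 "2*pi" "of_int k"] show ?thesis by simp
qed

definition exp_sum :: "('j \<Rightarrow> complex) \<Rightarrow> ('j \<Rightarrow> int) \<Rightarrow> 'j set \<Rightarrow> real \<Rightarrow> complex" where
  "exp_sum d \<xi> J x = (\<Sum>j\<in>J. d j * exp (\<i> * of_int (\<xi> j) * of_real x))"

definition collisions :: "('j \<Rightarrow> int) \<Rightarrow> 'j set \<Rightarrow> ('j \<times> 'j) set" where
  "collisions \<xi> J = {p \<in> J \<times> J. \<xi> (fst p) = \<xi> (snd p)}"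

definition collision_sum :: "('j \<Rightarrow> complex) \<Rightarrow> ('j \<Rightarrow> int) \<Rightarrow> 'j set \<Rightarrow> complex" where
  "collision_sum d \<xi> J = (\<Sum>p\<in>collisions \<xi> J. d (fst p) * cnj (d (snd p)))"

lemma finite_collisions: "finite J \<Longrightarrow> finite (collisions \<xi> J)"
  unfolding collisions_def by simp

lemma swap_in_collisions: "p \<in> collisions \<xi> J \<Longrightarrow> prod.swap p \<in> collisions \<xi> J"
  unfolding collisions_def by auto

lemma exp_int_mult_exp_int:
  "exp (\<i> * of_int a * of_real x) * exp (\<i> * of_int b * of_real x) = exp (\<i> * of_int (a + b) * of_real x)"
  by (simp add: exp_add[symmetric] algebra_simps)

lemma exp_sum_cong:
  assumes "\<And>j. j \<in> J \<Longrightarrow> d j = d' j" "\<And>j. j \<in> J \<Longrightarrow> \<xi> j = \<xi>' j"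
  shows "exp_sum d \<xi> J x = exp_sum d' \<xi>' J x"
  unfolding exp_sum_def using assms by (intro sum.cong) auto

lemma exp_sum_mult:
  assumes "finite J1" "finite J2"
  shows "exp_sum d1 \<xi>1 J1 x * exp_sum d2 \<xi>2 J2 x
    = exp_sum (\<lambda>p. d1 (fst p) * d2 (snd p)) (\<lambda>p. \<xi>1 (fst p) + \<xi>2 (snd p)) (J1 \<times> J2) x"
proof -
  have "exp_sum d1 \<xi>1 J1 x * exp_sum d2 \<xi>2 J2 x
      = (\<Sum>i\<in>J1. \<Sum>j\<in>J2. d1 i * d2 j * (exp (\<i> * of_int (\<xi>1 i) * of_real x) * exp (\<i> * of_int (\<xi>2 j) * of_real x)))"
    unfolding exp_sum_def sum_product by (simp only: mult_ac)
  then show ?thesis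
    unfolding exp_int_mult_exp_int exp_sum_def by (simp add: sum.cartesian_product case_prod_beta)
qed

lemma cnj_exp_sum: "cnj (exp_sum d \<xi> J x) = exp_sum (\<lambda>j. cnj (d j)) (\<lambda>j. - \<xi> j) J x"
  unfolding exp_sum_def cnj_sum by (simp add: exp_cnj)

lemma has_integral_exp_sum_period:
  assumes "finite J"
  shows "(exp_sum d \<xi> J has_integral of_real (2*pi) * (\<Sum>j\<in>{j\<in>J. \<xi> j = 0}. d j)) {0..2*pi}"
proof -
  have "(exp_sum d \<xi> J has_integral (\<Sum>j\<in>J. d j * (if \<xi> j = 0 then complex_of_real (2*pi) else 0))) {0..2*pi}"
    unfolding exp_sum_def[abs_def]
    by (intro has_integral_sum[OF assms] has_integral_mult_right has_integral_exp_int_period)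
  moreover have "(\<Sum>j\<in>J. d j * (if \<xi> j = 0 then complex_of_real (2*pi) else 0))
      = of_real (2*pi) * (\<Sum>j\<in>{j\<in>J. \<xi> j = 0}. d j)"
    using assms by (simp add: sum.inter_filter sum_distrib_left if_distrib mult_ac cong: if_cong)
  ultimately show ?thesis by simp
qed

lemma has_integral_norm_exp_sum_squared:
  assumes "finite J"
  shows "((\<lambda>x. complex_of_real ((cmod (exp_sum d \<xi> J x))\<^sup>2)) has_integral
    of_real (2*pi) * collision_sum d \<xi> J) {0..2*pi}"
proof -
  define D where "D p = d (fst p) * cnj (d (snd p))" for p
  define \<Xi> where "\<Xi> p = \<xi> (fst p) - \<xi> (snd p)" for p
  have "(\<lambda>x. complex_of_real ((cmod (exp_sum d \<xi> J x))\<^sup>2)) = exp_sum D \<Xi> (J \<times> J)"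
    unfolding D_def \<Xi>_def
    by (rule ext) (simp only: complex_norm_square exp_sum_mult[OF assms assms] cnj_exp_sum diff_conv_add_uminus)
  moreover have "{p \<in> J \<times> J. \<Xi> p = 0} = collisions \<xi> J"
    unfolding collisions_def \<Xi>_def by auto
  ultimately show ?thesis
    using has_integral_exp_sum_period[of "J \<times> J" D \<Xi>] assms
    unfolding collision_sum_def D_def by simp
qed

lemma integral_norm_exp_sum_squared:
  assumes "finite J"
  shows "complex_of_real (integral {0..2*pi} (\<lambda>x. (cmod (exp_sum d \<xi> J x))\<^sup>2))
    = of_real (2*pi) * collision_sum d \<xi> J"
proof -
  note h = has_integral_norm_exp_sum_squared[OF assms, of d \<xi>]
  then have "(\<lambda>x. (cmod (exp_sum d \<xi> J x))\<^sup>2) integrable_on {0..2*pi}"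
    by (rule has_integral_integrable[OF has_integral_Re_of_real])
  then show ?thesis
    using has_integral_unique[OF has_integral_of_real[OF integrable_integral] h] by simp
qed

lemma fcoef_exp_sum:
  assumes "finite J"
  shows "fcoef (exp_sum d \<xi> J) m = (\<Sum>j\<in>{j\<in>J. \<xi> j = m}. d j)"
proof -
  have "exp_sum d \<xi> J x * exp (- \<i> * of_int m * of_real x) = exp_sum d (\<lambda>j. \<xi> j - m) J x" for x
  proof -
    have "exp (\<i> * of_int a * of_real x) * exp (- \<i> * of_int m * of_real x) = exp (\<i> * of_int (a - m) * of_real x)"
      for a :: int
      using exp_int_mult_exp_int[where a = a and b = "- m" and x = x] by simp
    then show ?thesis unfolding exp_sum_def sum_distrib_right by (simp add: mult.assoc)
  qed
  then have "integral {0..2*pi} (\<lambda>x. exp_sum d \<xi> J x * exp (- \<i> * of_int m * of_real x))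
      = of_real (2*pi) * (\<Sum>j\<in>{j\<in>J. \<xi> j = m}. d j)"
    using integral_unique[OF has_integral_exp_sum_period[OF assms, of d "\<lambda>j. \<xi> j - m"]] by simp
  then show ?thesis unfolding fcoef_def by simp
qed

lemma fmult_exp_sum:
  assumes "finite J"
  shows "fmult \<sigma> (exp_sum d \<xi> J) x = exp_sum (\<lambda>j. \<sigma> (\<xi> j) * d j) \<xi> J x"
proof -
  have "fmult \<sigma> (exp_sum d \<xi> J) x
      = infsum (\<lambda>m. \<sigma> m * fcoef (exp_sum d \<xi> J) m * exp (\<i> * of_int m * of_real x)) (\<xi> ` J)"
    unfolding fmult_def
  proof (rule infsum_cong_neutral)
    fix m assume "m \<in> UNIV - \<xi> ` J"
    then have "{j\<in>J. \<xi> j = m} = {}" by auto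
    then have "fcoef (exp_sum d \<xi> J) m = 0" by (simp only: fcoef_exp_sum[OF assms] sum.empty)
    then show "\<sigma> m * fcoef (exp_sum d \<xi> J) m * exp (\<i> * of_int m * of_real x) = 0"
      by simp
  qed auto
  also have "\<dots> = (\<Sum>m\<in>\<xi> ` J. \<sigma> m * (\<Sum>j\<in>{j\<in>J. \<xi> j = m}. d j) * exp (\<i> * of_int m * of_real x))"
    using assms by (simp add: fcoef_exp_sum)
  also have "\<dots> = (\<Sum>m\<in>\<xi> ` J. \<Sum>j\<in>{j\<in>J. \<xi> j = m}. \<sigma> (\<xi> j) * d j * exp (\<i> * of_int (\<xi> j) * of_real x))"
    by (intro sum.cong refl) (simp add: sum_distrib_left sum_distrib_right mult_ac)
  also have "\<dots> = exp_sum (\<lambda>j. \<sigma> (\<xi> j) * d j) \<xi> J x"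
    unfolding exp_sum_def by (rule sum.group[OF assms finite_imageI[OF assms] subset_refl])
  finally show ?thesis .
qed

lemma trig_poly_eq_exp_sum:
  assumes "finite A" "\<forall>n. n \<notin> A \<longrightarrow> c n = 0"
  shows "trig_poly c x = exp_sum c id A x"
  unfolding trig_poly_def exp_sum_def
  by (intro sum.mono_neutral_cong_left) (use assms in auto)

lemma collision_sum_id:
  "collision_sum c id A = complex_of_real (\<Sum>n\<in>A. (cmod (c n))\<^sup>2)"
proof -
  have "collisions id A = (\<lambda>n. (n, n)) ` A" unfolding collisions_def by auto
  then show ?thesis
    unfolding collision_sum_def by (simp add: sum.reindex inj_on_def complex_norm_square[symmetric])
qed

lemma l2T_trig_poly:
  assumes "finite A" "\<forall>n. n \<notin> A \<longrightarrow> c n = 0"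
  shows "l2T (trig_poly c) = sqrt (2*pi * (\<Sum>n\<in>A. (cmod (c n))\<^sup>2))"
proof -
  have e: "trig_poly c = exp_sum c id A" by (rule ext) (rule trig_poly_eq_exp_sum[OF assms])
  have "complex_of_real (integral {0..2*pi} (\<lambda>x. (cmod (exp_sum c id A x))\<^sup>2))
      = complex_of_real (2*pi * (\<Sum>n\<in>A. (cmod (c n))\<^sup>2))"
    using integral_norm_exp_sum_squared[OF assms(1), of c id] by (simp add: collision_sum_id)
  then show ?thesis
    unfolding l2T_def e of_real_eq_iff by simp
qed

section \<open>Averaging in time\<close>

definition time_weight :: "real \<Rightarrow> real \<Rightarrow> real" where
  "time_weight L \<omega> = (if \<omega> = 0 then 2 * L\<^sup>2 else min (2 * L\<^sup>2) (4 / \<omega>\<^sup>2))"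

lemma time_weight_nonneg: "0 \<le> time_weight L \<omega>"
  by (simp add: time_weight_def)

lemma time_weight_minus: "time_weight L (- \<omega>) = time_weight L \<omega>"
  by (simp add: time_weight_def)

lemma time_weight_le: "time_weight L \<omega> \<le> 2 * L\<^sup>2"
  by (simp add: time_weight_def)

lemma time_weight_le_inverse_square: "\<omega> \<noteq> 0 \<Longrightarrow> time_weight L \<omega> \<le> 4 / \<omega>\<^sup>2"
  by (simp add: time_weight_def)

lemma norm_exp_ivl_integral_mult_le_time_weight:
  assumes "0 < L"
  shows "cmod (exp_ivl_integral 0 (2*L) \<omega>) * cmod (exp_ivl_integral (-L) 0 \<omega>) \<le> time_weight L \<omega>"
proof -
  have "cmod (exp_ivl_integral 0 (2*L) \<omega>) * cmod (exp_ivl_integral (-L) 0 \<omega>) \<le> (2*L) * L"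
    using norm_exp_ivl_integral_le_length[of 0 "2*L" \<omega>] norm_exp_ivl_integral_le_length[of "-L" 0 \<omega>] assms
    by (intro mult_mono) auto
  moreover have "cmod (exp_ivl_integral 0 (2*L) \<omega>) * cmod (exp_ivl_integral (-L) 0 \<omega>) \<le> 4 / \<omega>\<^sup>2"
    if "\<omega> \<noteq> 0"
  proof -
    have "cmod (exp_ivl_integral 0 (2*L) \<omega>) * cmod (exp_ivl_integral (-L) 0 \<omega>) \<le> (2 / \<bar>\<omega>\<bar>) * (2 / \<bar>\<omega>\<bar>)"
      using norm_exp_ivl_integral_le_inverse[OF that] by (intro mult_mono) auto
    then show ?thesis by (simp add: power2_eq_square)
  qed
  ultimately show ?thesis
    unfolding time_weight_def by (auto simp: power2_eq_square mult_ac)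
qed

lemma has_integral_exp_poly_Re:
  fixes g :: "'p \<Rightarrow> complex"
  assumes "finite P" "a \<le> b"
    and "\<And>t. complex_of_real (\<phi> t) = (\<Sum>p\<in>P. g p * exp (\<i> * of_real (\<omega> p) * of_real t))"
  shows "(\<phi> has_integral Re (\<Sum>p\<in>P. g p * exp_ivl_integral a b (\<omega> p))) {a..b}"
proof (rule has_integral_Re_of_real)
  show "((\<lambda>t. complex_of_real (\<phi> t)) has_integral (\<Sum>p\<in>P. g p * exp_ivl_integral a b (\<omega> p))) {a..b}"
    unfolding assms(3)
    by (intro has_integral_sum[OF assms(1)] has_integral_mult_right has_integral_exp_ivl assms(2))
qed

text \<open>For \<open>-L \<le> s \<le> 0\<close> the window \<open>[0, \<delta>]\<close> lies in \<open>[s, s + 2L]\<close>, so by positivity the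
  integral is at most the average over \<open>s\<close> of the integrals over these windows; for each frequency
  that double integral factorises into two interval integrals of \<open>exp (i \<omega> t)\<close>.\<close>

lemma integral_le_time_weight_sum:
  fixes g :: "'p \<Rightarrow> complex"
  assumes P: "finite P"
    and rep: "\<And>t. complex_of_real (\<phi> t) = (\<Sum>p\<in>P. g p * exp (\<i> * of_real (\<omega> p) * of_real t))"
    and nonneg: "\<And>t. 0 \<le> \<phi> t"
    and \<delta>: "0 < \<delta>" "\<delta> \<le> L"
  shows "integral {0..\<delta>} \<phi> \<le> (1/L) * (\<Sum>p\<in>P. cmod (g p) * time_weight L (\<omega> p))"
proof -
  have L: "0 < L" using \<delta> by simp
  note has_int = has_integral_exp_poly_Re[OF P _ rep]
  define X where "X = integral {0..\<delta>} \<phi>"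
  define \<psi> where "\<psi> s = Re (\<Sum>p\<in>P. g p * exp_ivl_integral 0 (2*L) (\<omega> p) * exp (\<i> * of_real (\<omega> p) * of_real s))" for s
  have X_le: "X \<le> \<psi> s" if s: "-L \<le> s" "s \<le> 0" for s
  proof -
    have "X \<le> integral {s..s+2*L} \<phi>"
      unfolding X_def
    proof (rule integral_subset_le)
      show "\<phi> integrable_on {0..\<delta>}" using has_int[of 0 \<delta>] \<delta> by (auto simp: integrable_on_def)
      show "\<phi> integrable_on {s..s+2*L}" using has_int[of s "s+2*L"] L by (auto simp: integrable_on_def)
    qed (use s \<delta> nonneg in auto)
    also have "\<dots> = Re (\<Sum>p\<in>P. g p * exp_ivl_integral s (s+2*L) (\<omega> p))"
      by (rule integral_unique[OF has_int]) (use L in linarith)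
    also have "\<dots> = \<psi> s"
      unfolding \<psi>_def exp_ivl_integral_shift by (simp only: mult_ac)
    finally show ?thesis .
  qed
  have "((\<lambda>s. \<Sum>p\<in>P. g p * exp_ivl_integral 0 (2*L) (\<omega> p) * exp (\<i> * of_real (\<omega> p) * of_real s)) has_integral
      (\<Sum>p\<in>P. g p * exp_ivl_integral 0 (2*L) (\<omega> p) * exp_ivl_integral (-L) 0 (\<omega> p))) {-L..0}"
    using L by (intro has_integral_sum[OF P] has_integral_mult_right has_integral_exp_ivl) linarith
  from has_integral_linear[OF this bounded_linear_Re]
  have has_int_\<psi>: "(\<psi> has_integral Re (\<Sum>p\<in>P. g p * exp_ivl_integral 0 (2*L) (\<omega> p) * exp_ivl_integral (-L) 0 (\<omega> p))) {-L..0}"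
    unfolding \<psi>_def o_def .
  have "L * X = integral {-L..0} (\<lambda>s. X)" using L by simp
  also have "\<dots> \<le> integral {-L..0} \<psi>"
    using X_le has_integral_integrable[OF has_int_\<psi>] by (intro integral_le) auto
  also have "\<dots> = Re (\<Sum>p\<in>P. g p * exp_ivl_integral 0 (2*L) (\<omega> p) * exp_ivl_integral (-L) 0 (\<omega> p))"
    using has_int_\<psi> by (rule integral_unique)
  also have "\<dots> \<le> (\<Sum>p\<in>P. cmod (g p * exp_ivl_integral 0 (2*L) (\<omega> p) * exp_ivl_integral (-L) 0 (\<omega> p)))"
    by (rule order_trans[OF complex_Re_le_cmod norm_sum])
  also have "\<dots> \<le> (\<Sum>p\<in>P. cmod (g p) * time_weight L (\<omega> p))"
    unfolding norm_mult mult.assoc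
    by (intro sum_mono mult_left_mono norm_exp_ivl_integral_mult_le_time_weight L) simp
  finally show ?thesis unfolding X_def using L by (simp add: field_simps)
qed

section \<open>Sums over separated frequencies\<close>

lemma sum_inverse_squares_atLeastAtMost_le:
  "n \<ge> 1 \<Longrightarrow> (\<Sum>q\<in>{1..int n}. 1 / (real_of_int q)\<^sup>2) \<le> 2 - 1 / real n"
proof (induction n rule: nat_induct_at_least)
  case base then show ?case by simp
next
  case (Suc n)
  have n: "real n \<ge> 1" using Suc.hyps by simp
  have "1 / (real n + 1)\<^sup>2 \<le> 1 / (real n * (real n + 1))"
    using n by (intro divide_left_mono) (auto simp: power2_eq_square)
  also have "\<dots> = 1 / real n - 1 / (real n + 1)" using n by (simp add: field_simps)
  finally have step: "1 / (real n + 1)\<^sup>2 \<le> 1 / real n - 1 / (real n + 1)" .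
  have "{1..int (Suc n)} = insert (int n + 1) {1..int n}" by auto
  then have "(\<Sum>q\<in>{1..int (Suc n)}. 1 / (real_of_int q)\<^sup>2)
      = 1 / (real n + 1)\<^sup>2 + (\<Sum>q\<in>{1..int n}. 1 / (real_of_int q)\<^sup>2)"
    by simp
  moreover have "1 / real (Suc n) = 1 / (real n + 1)" by simp
  ultimately show ?case using Suc.IH step by linarith
qed

lemma sum_inverse_squares_le:
  fixes T :: "int set"
  assumes "finite T" "\<And>q. q \<in> T \<Longrightarrow> 1 \<le> q"
  shows "(\<Sum>q\<in>T. 1 / (real_of_int q)\<^sup>2) \<le> 2"
proof (cases "T = {}")
  case False
  define n where "n = nat (Max T)"
  have n: "n \<ge> 1" using assms Max_in[OF assms(1) False] unfolding n_def by fastforce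
  have "T \<subseteq> {1..int n}" using assms Max_ge[OF assms(1)] n unfolding n_def by fastforce
  then have "(\<Sum>q\<in>T. 1 / (real_of_int q)\<^sup>2) \<le> (\<Sum>q\<in>{1..int n}. 1 / (real_of_int q)\<^sup>2)"
    by (rule sum_mono2[rotated]) auto
  also have "\<dots> \<le> 2 - 1 / real n" by (rule sum_inverse_squares_atLeastAtMost_le[OF n])
  also have "\<dots> \<le> 2" by simp
  finally show ?thesis .
qed simp

lemma inj_on_floor_divide_separated:
  fixes G :: real
  assumes G: "0 < G" and sep: "\<And>u v. u \<in> V \<Longrightarrow> v \<in> V \<Longrightarrow> u \<noteq> v \<Longrightarrow> G \<le> \<bar>u - v\<bar>"
  shows "inj_on (\<lambda>v. \<lfloor>v / G\<rfloor>) V"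
proof (rule inj_onI, rule ccontr)
  fix u v assume uv: "u \<in> V" "v \<in> V" "\<lfloor>u / G\<rfloor> = \<lfloor>v / G\<rfloor>" "u \<noteq> v"
  then have "\<bar>u / G - v / G\<bar> < 1" by linarith
  also have "\<bar>u / G - v / G\<bar> = \<bar>u - v\<bar> / G"
    using G by (simp add: diff_divide_distrib[symmetric])
  finally have "\<bar>u - v\<bar> < G" using G by (simp add: divide_less_eq)
  with sep[OF uv(1,2,4)] show False by linarith
qed

lemma time_weight_le_floor:
  assumes G: "0 < G" and q: "1 \<le> \<lfloor>v / G\<rfloor>"
  shows "time_weight L v \<le> 4 / G\<^sup>2 * (1 / (real_of_int \<lfloor>v / G\<rfloor>)\<^sup>2)"
proof -
  have qG: "real_of_int \<lfloor>v / G\<rfloor> * G \<le> v"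
    using of_int_floor_le[of "v / G"] G by (simp add: le_divide_eq)
  have pos: "0 < real_of_int \<lfloor>v / G\<rfloor> * G" using q G by simp
  with qG have v: "0 < v" by linarith
  have "4 / v\<^sup>2 \<le> 4 / (real_of_int \<lfloor>v / G\<rfloor> * G)\<^sup>2"
  proof (rule divide_left_mono)
    show "(real_of_int \<lfloor>v / G\<rfloor> * G)\<^sup>2 \<le> v\<^sup>2" using qG pos by (intro power_mono) auto
    show "0 < v\<^sup>2 * (real_of_int \<lfloor>v / G\<rfloor> * G)\<^sup>2"
      using mult_pos_pos[OF mult_pos_pos[OF v v] mult_pos_pos[OF pos pos]] by (simp only: power2_eq_square)
  qed simp
  then show ?thesis
    using time_weight_le_inverse_square[of v L] v by (simp add: power_mult_distrib mult.commute)
qed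

text \<open>The points \<open>v \<ge> G\<close> have distinct integer parts \<open>\<lfloor>v/G\<rfloor> \<ge> 1\<close>, whence
  their weights add up to at most \<open>4/G\<^sup>2 \<Sum> 1/q\<^sup>2\<close>.\<close>

lemma sum_time_weight_separated_nonneg:
  fixes V :: "real set"
  assumes V: "finite V" and G: "0 < G" and nonneg: "\<And>v. v \<in> V \<Longrightarrow> 0 \<le> v"
    and sep: "\<And>u v. u \<in> V \<Longrightarrow> v \<in> V \<Longrightarrow> u \<noteq> v \<Longrightarrow> G \<le> \<bar>u - v\<bar>"
  shows "(\<Sum>v\<in>V. time_weight L v) \<le> 2 * L\<^sup>2 + 8 / G\<^sup>2"
proof -
  define q where "q v = \<lfloor>v / G\<rfloor>" for v
  define U where "U k = (if k = 0 then 2 * L\<^sup>2 else 4 / G\<^sup>2 * (1 / (real_of_int k)\<^sup>2))" for k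
  have inj: "inj_on q V" unfolding q_def by (rule inj_on_floor_divide_separated[OF G sep])
  have q_nonneg: "0 \<le> q v" if "v \<in> V" for v
    unfolding q_def using nonneg[OF that] G by simp
  have "time_weight L v \<le> U (q v)" if "v \<in> V" for v
  proof (cases "q v = 0")
    case False
    then have "1 \<le> q v" using q_nonneg[OF that] by simp
    then show ?thesis using time_weight_le_floor[OF G, of v L] False unfolding U_def q_def by simp
  qed (simp add: U_def time_weight_le)
  then have "(\<Sum>v\<in>V. time_weight L v) \<le> (\<Sum>k\<in>q ` V. U k)"
    by (simp add: sum.reindex[OF inj] sum_mono)
  also have "\<dots> = (\<Sum>k\<in>q ` V \<inter> {0}. U k) + (\<Sum>k\<in>q ` V - {0}. U k)"
    using V by (intro sum.Int_Diff) simp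
  also have "(\<Sum>k\<in>q ` V \<inter> {0}. U k) \<le> 2 * L\<^sup>2"
    by (cases "0 \<in> q ` V") (simp_all add: U_def)
  also have "(\<Sum>k\<in>q ` V - {0}. U k) = 4 / G\<^sup>2 * (\<Sum>k\<in>q ` V - {0}. 1 / (real_of_int k)\<^sup>2)"
    unfolding sum_distrib_left U_def by simp
  also have "\<dots> \<le> 4 / G\<^sup>2 * 2"
  proof (intro mult_left_mono sum_inverse_squares_le)
    show "1 \<le> k" if "k \<in> q ` V - {0}" for k
      using that q_nonneg by fastforce
  qed (use V in simp_all)
  finally show ?thesis by simp
qed

lemma sum_time_weight_separated:
  assumes S: "finite S" and G: "0 < G"
    and sep: "\<And>x y. x \<in> S \<Longrightarrow> y \<in> S \<Longrightarrow> x \<noteq> y \<Longrightarrow> G \<le> \<bar>f x - f y\<bar>"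
  shows "(\<Sum>x\<in>S. time_weight L (f x)) \<le> 4 * L\<^sup>2 + 16 / G\<^sup>2"
proof -
  define V where "V = f ` S"
  have V: "finite V" using S unfolding V_def by simp
  have sepV: "G \<le> \<bar>u - v\<bar>" if "u \<in> V" "v \<in> V" "u \<noteq> v" for u v
    using that sep unfolding V_def by blast
  have "inj_on f S"
  proof (rule inj_onI, rule ccontr)
    fix x y assume "x \<in> S" "y \<in> S" "f x = f y" "x \<noteq> y"
    then show False using sep[of x y] G by simp
  qed
  then have "(\<Sum>x\<in>S. time_weight L (f x)) = (\<Sum>v\<in>V. time_weight L v)"
    unfolding V_def by (simp add: sum.reindex)
  also have "\<dots> = (\<Sum>v\<in>V \<inter> {0..}. time_weight L v) + (\<Sum>v\<in>V - {0..}. time_weight L v)"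
    by (rule sum.Int_Diff[OF V])
  also have "(\<Sum>v\<in>V - {0..}. time_weight L v) = (\<Sum>v\<in>uminus ` (V - {0..}). time_weight L v)"
    by (simp add: sum.reindex time_weight_minus)
  also have "(\<Sum>v\<in>V \<inter> {0..}. time_weight L v) + \<dots> \<le> (2 * L\<^sup>2 + 8 / G\<^sup>2) + (2 * L\<^sup>2 + 8 / G\<^sup>2)"
  proof (intro add_mono sum_time_weight_separated_nonneg G)
    show "G \<le> \<bar>u - v\<bar>" if "u \<in> uminus ` (V - {0..})" "v \<in> uminus ` (V - {0..})" "u \<noteq> v" for u v
      using that sepV by (auto simp: abs_minus_commute)
  qed (use V sepV in auto)
  finally show ?thesis by simp
qed

section \<open>The trilinear expression as an exponential sum\<close>

definition conj_sign :: "bool \<Rightarrow> int" where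
  "conj_sign cj = (if cj then -1 else 1)"

definition cnj_if :: "bool \<Rightarrow> complex \<Rightarrow> complex" where
  "cnj_if cj z = (if cj then cnj z else z)"

abbreviation evolved :: "real \<Rightarrow> (int \<Rightarrow> complex) \<Rightarrow> int \<Rightarrow> complex" where
  "evolved t c n \<equiv> exp (- \<i> * of_real t * of_int (n\<^sup>2)) * c n"

text \<open>An index \<open>((n\<^sub>1, n\<^sub>2), n\<^sub>3)\<close> labels the product of the modes \<open>n\<^sub>1\<close>, \<open>-n\<^sub>2\<close> and
  \<open>\<plusminus>n\<^sub>3\<close> of the three factors; it oscillates in \<open>x\<close> with \<open>trilin_freq\<close> and in \<open>t\<close> with
  \<open>-trilin_phase\<close>.\<close>

definition trilin_freq :: "bool \<Rightarrow> (int \<times> int) \<times> int \<Rightarrow> int" where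
  "trilin_freq cj j = fst (fst j) - snd (fst j) + conj_sign cj * snd j"

definition trilin_phase :: "bool \<Rightarrow> (int \<times> int) \<times> int \<Rightarrow> int" where
  "trilin_phase cj j = (fst (fst j))\<^sup>2 - (snd (fst j))\<^sup>2 + conj_sign cj * (snd j)\<^sup>2"

definition trilin_coeff :: "(int \<Rightarrow> complex) \<Rightarrow> (real \<Rightarrow> real) \<Rightarrow> real \<Rightarrow> bool \<Rightarrow>
    (int \<Rightarrow> complex) \<Rightarrow> (int \<Rightarrow> complex) \<Rightarrow> (int \<Rightarrow> complex) \<Rightarrow> (int \<times> int) \<times> int \<Rightarrow> complex" where
  "trilin_coeff \<sigma> \<eta> K cj c1 c2 c3 j = \<sigma> (fst (fst j) - snd (fst j)) * lp_symbol \<eta> K (fst (fst j) - snd (fst j))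
     * c1 (fst (fst j)) * cnj (c2 (snd (fst j))) * cnj_if cj (c3 (snd j))"

lemma schr_eq_exp_sum:
  assumes "finite A" "\<forall>n. n \<notin> A \<longrightarrow> c n = 0"
  shows "schr c t x = exp_sum (evolved t c) id A x"
  unfolding schr_def by (rule trig_poly_eq_exp_sum) (use assms in auto)

lemma cnj_if_schr_eq_exp_sum:
  assumes "finite A" "\<forall>n. n \<notin> A \<longrightarrow> c n = 0"
  shows "cnj_if cj (schr c t x)
    = exp_sum (\<lambda>n. exp (- \<i> * of_real t * of_int (conj_sign cj * n\<^sup>2)) * cnj_if cj (c n)) (\<lambda>n. conj_sign cj * n) A x"
  unfolding schr_eq_exp_sum[OF assms] cnj_if_def conj_sign_def
  by (cases cj) (auto simp: cnj_exp_sum exp_cnj intro: exp_sum_cong)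

lemma trilin_eq_exp_sum:
  assumes fin: "finite A1" "finite A2" "finite A3"
    and supp: "\<forall>n. n \<notin> A1 \<longrightarrow> c1 n = 0" "\<forall>n. n \<notin> A2 \<longrightarrow> c2 n = 0" "\<forall>n. n \<notin> A3 \<longrightarrow> c3 n = 0"
  shows "trilin \<sigma> \<eta> K cj c1 c2 c3 t x =
    exp_sum (\<lambda>j. trilin_coeff \<sigma> \<eta> K cj c1 c2 c3 j * exp (\<i> * of_real (of_int (- trilin_phase cj j)) * of_real t))
      (trilin_freq cj) ((A1 \<times> A2) \<times> A3) x"
proof -
  define d12 where "d12 p = evolved t c1 (fst p) * cnj (evolved t c2 (snd p))" for p :: "int \<times> int"
  define \<xi>12 where "\<xi>12 p = fst p - snd p" for p :: "int \<times> int"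
  have fin12: "finite (A1 \<times> A2)" using fin by simp
  have prod12: "(\<lambda>y. schr c1 t y * cnj (schr c2 t y)) = exp_sum d12 \<xi>12 (A1 \<times> A2)"
    unfolding schr_eq_exp_sum[OF fin(1) supp(1)] schr_eq_exp_sum[OF fin(2) supp(2)] cnj_exp_sum
      exp_sum_mult[OF fin(1,2)] d12_def \<xi>12_def
    by (rule ext) simp
  have "trilin \<sigma> \<eta> K cj c1 c2 c3 t x =
     exp_sum (\<lambda>p. \<sigma> (\<xi>12 p) * (lp_symbol \<eta> K (\<xi>12 p) * d12 p)) \<xi>12 (A1 \<times> A2) x
     * exp_sum (\<lambda>n. exp (- \<i> * of_real t * of_int (conj_sign cj * n\<^sup>2)) * cnj_if cj (c3 n)) (\<lambda>n. conj_sign cj * n) A3 x"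
    unfolding trilin_def prod12 fmult_exp_sum[OF fin12, abs_def] fmult_exp_sum[OF fin12]
      cnj_if_def[symmetric] cnj_if_schr_eq_exp_sum[OF fin(3) supp(3)] ..
  also have "\<dots> = exp_sum (\<lambda>j. trilin_coeff \<sigma> \<eta> K cj c1 c2 c3 j * exp (\<i> * of_real (of_int (- trilin_phase cj j)) * of_real t))
      (trilin_freq cj) ((A1 \<times> A2) \<times> A3) x"
    unfolding exp_sum_mult[OF fin12 fin(3)]
  proof (rule exp_sum_cong)
    fix j :: "(int \<times> int) \<times> int"
    obtain n1 n2 n3 where j: "j = ((n1, n2), n3)" by (metis prod.collapse)
    have "exp (- \<i> * of_real t * of_int (n1\<^sup>2)) * cnj (exp (- \<i> * of_real t * of_int (n2\<^sup>2)))
        * exp (- \<i> * of_real t * of_int (conj_sign cj * n3\<^sup>2))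
        = exp (\<i> * of_real (of_int (- trilin_phase cj j)) * of_real t)"
      unfolding j trilin_phase_def exp_cnj by (simp add: exp_add[symmetric] algebra_simps)
    then show "\<sigma> (\<xi>12 (fst j)) * (lp_symbol \<eta> K (\<xi>12 (fst j)) * d12 (fst j)) *
        (exp (- \<i> * of_real t * of_int (conj_sign cj * (snd j)\<^sup>2)) * cnj_if cj (c3 (snd j)))
      = trilin_coeff \<sigma> \<eta> K cj c1 c2 c3 j * exp (\<i> * of_real (of_int (- trilin_phase cj j)) * of_real t)"
      unfolding j \<xi>12_def d12_def trilin_coeff_def by (simp add: mult_ac)
    show "\<xi>12 (fst j) + conj_sign cj * snd j = trilin_freq cj j"
      unfolding \<xi>12_def trilin_freq_def by simp
  qed
  finally show ?thesis .
qed

lemma integral_norm_trilin_squared_le: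
  fixes \<sigma> :: "int \<Rightarrow> complex" and \<eta> :: "real \<Rightarrow> real" and K :: real and cj :: bool
  assumes fin: "finite A1" "finite A2" "finite A3"
    and supp: "\<forall>n. n \<notin> A1 \<longrightarrow> c1 n = 0" "\<forall>n. n \<notin> A2 \<longrightarrow> c2 n = 0" "\<forall>n. n \<notin> A3 \<longrightarrow> c3 n = 0"
    and \<delta>: "0 < \<delta>" "\<delta> \<le> L"
  defines "B \<equiv> trilin_coeff \<sigma> \<eta> K cj c1 c2 c3"
  shows "integral {0..\<delta>} (\<lambda>t. integral {0..2*pi} (\<lambda>x. (cmod (trilin \<sigma> \<eta> K cj c1 c2 c3 t x))\<^sup>2))
    \<le> 2 * pi / L * (\<Sum>p\<in>collisions (trilin_freq cj) ((A1 \<times> A2) \<times> A3).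
         cmod (B (fst p)) * cmod (B (snd p)) * time_weight L (of_int (trilin_phase cj (snd p) - trilin_phase cj (fst p))))"
proof -
  define J where "J = (A1 \<times> A2) \<times> A3"
  have fin_J: "finite J" unfolding J_def using fin by simp
  define D where "D t j = B j * exp (\<i> * of_real (of_int (- trilin_phase cj j)) * of_real t)" for t j
  have trilin_eq: "trilin \<sigma> \<eta> K cj c1 c2 c3 t = exp_sum (D t) (trilin_freq cj) J" for t
    unfolding D_def B_def J_def by (rule ext) (rule trilin_eq_exp_sum[OF fin supp])
  have "complex_of_real (integral {0..2*pi} (\<lambda>x. (cmod (trilin \<sigma> \<eta> K cj c1 c2 c3 t x))\<^sup>2))
     = (\<Sum>p\<in>collisions (trilin_freq cj) J. (of_real (2*pi) * (B (fst p) * cnj (B (snd p))))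
          * exp (\<i> * of_real (of_int (trilin_phase cj (snd p) - trilin_phase cj (fst p))) * of_real t))" for t
    unfolding trilin_eq integral_norm_exp_sum_squared[OF fin_J] collision_sum_def sum_distrib_left
  proof (intro sum.cong refl)
    fix p :: "((int \<times> int) \<times> int) \<times> (int \<times> int) \<times> int"
    show "of_real (2*pi) * (D t (fst p) * cnj (D t (snd p)))
      = of_real (2*pi) * (B (fst p) * cnj (B (snd p)))
          * exp (\<i> * of_real (of_int (trilin_phase cj (snd p) - trilin_phase cj (fst p))) * of_real t)"
      unfolding D_def complex_cnj_mult exp_cnj by (simp add: exp_add[symmetric] algebra_simps)
  qed
  moreover have "0 \<le> integral {0..2*pi} (\<lambda>x. (cmod (trilin \<sigma> \<eta> K cj c1 c2 c3 t x))\<^sup>2)" for t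
    unfolding trilin_eq
    using has_integral_Re_of_real[OF has_integral_norm_exp_sum_squared[OF fin_J]]
    by (intro integral_nonneg has_integral_integrable) auto
  ultimately have "integral {0..\<delta>} (\<lambda>t. integral {0..2*pi} (\<lambda>x. (cmod (trilin \<sigma> \<eta> K cj c1 c2 c3 t x))\<^sup>2))
     \<le> (1/L) * (\<Sum>p\<in>collisions (trilin_freq cj) J. cmod (of_real (2*pi) * (B (fst p) * cnj (B (snd p))))
          * time_weight L (of_int (trilin_phase cj (snd p) - trilin_phase cj (fst p))))"
    by (intro integral_le_time_weight_sum finite_collisions fin_J \<delta>)
  also have "\<dots> = 2 * pi / L * (\<Sum>p\<in>collisions (trilin_freq cj) J.
      cmod (B (fst p)) * cmod (B (snd p)) * time_weight L (of_int (trilin_phase cj (snd p) - trilin_phase cj (fst p))))"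
    by (simp add: norm_mult sum_distrib_left mult_ac)
  finally show ?thesis unfolding J_def .
qed

section \<open>Counting collisions\<close>

definition low_freqs :: "real \<Rightarrow> int set" where
  "low_freqs K = {m. \<bar>real_of_int m\<bar> \<le> 2 * K}"

lemma low_freqs_eq: "low_freqs K = {-\<lfloor>2*K\<rfloor>..\<lfloor>2*K\<rfloor>}"
  unfolding low_freqs_def by (auto simp: abs_le_iff le_floor_iff) (metis floor_le_iff le_floor_iff minus_le_iff of_int_minus)+

lemma finite_low_freqs: "finite (low_freqs K)"
  unfolding low_freqs_eq by simp

lemma card_low_freqs_le:
  assumes "1 \<le> K"
  shows "real (card (low_freqs K)) \<le> 5 * K"
proof -
  have "real (card (low_freqs K)) = 2 * real_of_int \<lfloor>2*K\<rfloor> + 1"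
    unfolding low_freqs_eq using assms by simp
  also have "\<dots> \<le> 5 * K" using of_int_floor_le[of "2*K"] assms by linarith
  finally show ?thesis .
qed

lemma norm_lp_symbol_le:
  assumes "0 < K" and \<eta>_range: "\<And>y. 0 \<le> \<eta> y \<and> \<eta> y \<le> 1"
    and \<eta>_vanish: "\<And>y. 5/3 < \<bar>y\<bar> \<Longrightarrow> \<eta> y = 0"
  shows "cmod (lp_symbol \<eta> K m) \<le> indicator (low_freqs K) m"
proof (cases "m \<in> low_freqs K")
  case False
  then have "2 < \<bar>real_of_int m\<bar> / K" using assms(1) by (simp add: low_freqs_def less_divide_eq mult.commute)
  moreover have "\<bar>real_of_int m / K\<bar> = \<bar>real_of_int m\<bar> / K" using assms(1) by simp
  ultimately have "\<eta> (real_of_int m / K) = 0" by (intro \<eta>_vanish) linarith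
  then show ?thesis using False unfolding lp_symbol_def by simp
qed (use \<eta>_range in \<open>simp add: lp_symbol_def\<close>)

lemma norm_trilin_coeff_le:
  assumes \<sigma>: "\<And>m. cmod (\<sigma> m) \<le> M" and "0 < K"
    and "\<And>y. 0 \<le> \<eta> y \<and> \<eta> y \<le> 1" "\<And>y. 5/3 < \<bar>y\<bar> \<Longrightarrow> \<eta> y = 0"
  shows "cmod (trilin_coeff \<sigma> \<eta> K cj c1 c2 c3 ((n1, n2), n3))
    \<le> M * (indicator (low_freqs K) (n1 - n2) * (cmod (c1 n1) * cmod (c2 n2) * cmod (c3 n3)))"
proof -
  have "cmod (\<sigma> (n1 - n2)) * cmod (lp_symbol \<eta> K (n1 - n2)) \<le> M * indicator (low_freqs K) (n1 - n2)"
    using norm_lp_symbol_le[OF assms(2-4)] \<sigma> order_trans[OF norm_ge_zero \<sigma>] by (intro mult_mono) auto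
  then show ?thesis
    unfolding trilin_coeff_def cnj_if_def
    by (simp add: norm_mult mult.assoc[symmetric] mult_right_mono)
qed

lemma sum_weighted_le_swap_average:
  fixes g X W :: "'a \<times> 'a \<Rightarrow> real"
  assumes P: "finite P" "\<And>p. p \<in> P \<Longrightarrow> prod.swap p \<in> P"
    and W: "\<And>p. W (prod.swap p) = W p" "\<And>p. 0 \<le> W p"
    and g: "\<And>p. p \<in> P \<Longrightarrow> g p \<le> (X p + X (prod.swap p)) / 2"
  shows "(\<Sum>p\<in>P. g p * W p) \<le> (\<Sum>p\<in>P. X p * W p)"
proof -
  have swap: "(\<Sum>p\<in>P. X (prod.swap p) * W p) = (\<Sum>p\<in>P. X p * W p)"
    by (rule sum.reindex_bij_witness[of _ prod.swap prod.swap]) (auto simp: P W)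
  have "g p * W p \<le> (X p * W p + X (prod.swap p) * W p) / 2" if "p \<in> P" for p
    using mult_right_mono[OF g[OF that] W(2)] by (simp add: distrib_right)
  then have "(\<Sum>p\<in>P. g p * W p) \<le> (\<Sum>p\<in>P. (X p * W p + X (prod.swap p) * W p) / 2)"
    by (rule sum_mono)
  also have "\<dots> = (\<Sum>p\<in>P. X p * W p)"
    unfolding sum_divide_distrib[symmetric] sum.distrib swap by simp
  finally show ?thesis .
qed

text \<open>A colliding pair \<open>(((n\<^sub>1, n\<^sub>2), n\<^sub>3), ((n\<^sub>1', n\<^sub>2'), n\<^sub>3'))\<close> is determined by \<open>n\<^sub>1\<close>,
  \<open>n\<^sub>2'\<close>, \<open>n\<^sub>3\<close> and the differences \<open>m = n\<^sub>1 - n\<^sub>2\<close>, \<open>m' = n\<^sub>1' - n\<^sub>2'\<close>.\<close>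

lemma sum_collisions_le_sum_params:
  fixes F :: "((int \<times> int) \<times> int) \<times> ((int \<times> int) \<times> int) \<Rightarrow> real"
  assumes fin: "finite A1" "finite A2" "finite A3" "finite R" and F: "\<And>p. 0 \<le> F p"
  shows "(\<Sum>p\<in>{p \<in> collisions (trilin_freq cj) ((A1 \<times> A2) \<times> A3).
        fst (fst (fst p)) - snd (fst (fst p)) \<in> R \<and> fst (fst (snd p)) - snd (fst (snd p)) \<in> R}. F p)
    \<le> (\<Sum>n1\<in>A1. \<Sum>n2\<in>A2. \<Sum>n3\<in>A3. \<Sum>m\<in>R. \<Sum>m'\<in>R.
          F (((n1, n1 - m), n3), ((n2 + m', n2), n3 + conj_sign cj * (m - m'))))"
proof -
  define \<psi> where "\<psi> u = (case u of (n1, n2, n3, m, m') \<Rightarrow>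
      (((n1, n1 - m), n3), ((n2 + m', n2), n3 + conj_sign cj * (m - m'))))" for u :: "int \<times> int \<times> int \<times> int \<times> int"
  define U where "U = A1 \<times> A2 \<times> A3 \<times> R \<times> R"
  have fin_U: "finite U" unfolding U_def using fin by simp
  have "{p \<in> collisions (trilin_freq cj) ((A1 \<times> A2) \<times> A3).
        fst (fst (fst p)) - snd (fst (fst p)) \<in> R \<and> fst (fst (snd p)) - snd (fst (snd p)) \<in> R} \<subseteq> \<psi> ` U"
  proof
    fix p assume p_mem: "p \<in> {p \<in> collisions (trilin_freq cj) ((A1 \<times> A2) \<times> A3).
        fst (fst (fst p)) - snd (fst (fst p)) \<in> R \<and> fst (fst (snd p)) - snd (fst (snd p)) \<in> R}"
    obtain a b c a' b' c' where p: "p = (((a, b), c), ((a', b'), c'))" by (metis prod.collapse)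
    have mem: "(a, b', c, a - b, a' - b') \<in> U"
      and freq: "a - b + conj_sign cj * c = a' - b' + conj_sign cj * c'"
      using p_mem unfolding p U_def collisions_def trilin_freq_def by auto
    have "c' = c + conj_sign cj * ((a - b) - (a' - b'))"
      using freq by (cases cj) (simp_all add: conj_sign_def)
    then have "p = \<psi> (a, b', c, a - b, a' - b')" unfolding p \<psi>_def by simp
    with mem show "p \<in> \<psi> ` U" by blast
  qed
  then have "(\<Sum>p\<in>{p \<in> collisions (trilin_freq cj) ((A1 \<times> A2) \<times> A3).
        fst (fst (fst p)) - snd (fst (fst p)) \<in> R \<and> fst (fst (snd p)) - snd (fst (snd p)) \<in> R}. F p)
      \<le> (\<Sum>p\<in>\<psi> ` U. F p)"
    using fin_U F by (intro sum_mono2) auto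
  also have "\<dots> \<le> (\<Sum>u\<in>U. F (\<psi> u))"
    using sum_image_le[of U F \<psi>] fin_U F by (simp add: o_def)
  also have "\<dots> = (\<Sum>n1\<in>A1. \<Sum>n2\<in>A2. \<Sum>n3\<in>A3. \<Sum>m\<in>R. \<Sum>m'\<in>R.
          F (((n1, n1 - m), n3), ((n2 + m', n2), n3 + conj_sign cj * (m - m'))))"
    unfolding U_def sum.cartesian_product' \<psi>_def by simp
  finally show ?thesis .
qed

lemma trilin_phase_diff:
  "trilin_phase cj ((n2 + x, n2), n3 + conj_sign cj * (m - x)) - trilin_phase cj ((n2 + y, n2), n3 + conj_sign cj * (m - y))
   = (x - y) * (2 * n2 + (x + y - 2 * n3 - conj_sign cj * (2 * m - x - y)))"
  unfolding trilin_phase_def conj_sign_def by (cases cj) (simp_all add: algebra_simps power2_eq_square)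

text \<open>With \<open>n\<^sub>2\<close>, \<open>n\<^sub>3\<close> and \<open>m\<close> fixed, the phase moves by at least \<open>N\<^sub>2/2\<close> per unit step
  of \<open>m'\<close>, because \<open>|n\<^sub>2| \<ge> N\<^sub>2/2\<close> dominates the other modes:
  this is where \<open>N\<^sub>1 \<sim> N\<^sub>2 \<gg> N\<^sub>3, K\<close> enters.\<close>

lemma sum_time_weight_trilin_phase_le:
  fixes N2 N3 K L :: real
  assumes "0 < N2" and n2: "N2 / 2 \<le> \<bar>real_of_int n2\<bar>" and n3: "\<bar>real_of_int n3\<bar> \<le> 2 * N3"
    and small: "12 * K + 4 * N3 \<le> N2 / 2" and m: "m \<in> low_freqs K"
  shows "(\<Sum>m'\<in>low_freqs K. time_weight L (of_int (trilin_phase cj ((n2 + m', n2), n3 + conj_sign cj * (m - m')) - T0)))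
    \<le> 4 * L\<^sup>2 + 16 / (N2 / 2)\<^sup>2"
proof (rule sum_time_weight_separated[OF finite_low_freqs])
  show "0 < N2 / 2" using assms(1) by simp
  fix x y assume xy: "x \<in> low_freqs K" "y \<in> low_freqs K" "x \<noteq> y"
  define e where "e = x + y - 2 * n3 - conj_sign cj * (2 * m - x - y)"
  have "\<bar>real_of_int (conj_sign cj * (2 * m - x - y))\<bar> = \<bar>real_of_int (2 * m - x - y)\<bar>"
    by (cases cj) (simp_all add: conj_sign_def)
  also have "\<dots> \<le> 8 * K" using xy m unfolding low_freqs_def by simp
  finally have "\<bar>real_of_int e\<bar> \<le> 12 * K + 4 * N3"
    using xy n3 unfolding e_def low_freqs_def by simp
  then have "N2 / 2 \<le> \<bar>real_of_int (2 * n2 + e)\<bar>" using n2 small by linarith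
  moreover have "1 \<le> \<bar>real_of_int (x - y)\<bar>" using xy(3) by linarith
  ultimately have "N2 / 2 \<le> \<bar>real_of_int (x - y)\<bar> * \<bar>real_of_int (2 * n2 + e)\<bar>"
    using mult_mono[of 1 "\<bar>real_of_int (x - y)\<bar>" "N2 / 2" "\<bar>real_of_int (2 * n2 + e)\<bar>"] assms(1) by simp
  then show "N2 / 2 \<le> \<bar>real_of_int (trilin_phase cj ((n2 + x, n2), n3 + conj_sign cj * (m - x)) - T0)
      - real_of_int (trilin_phase cj ((n2 + y, n2), n3 + conj_sign cj * (m - y)) - T0)\<bar>"
    using trilin_phase_diff[of cj n2 x n3 m y] unfolding e_def
    by (simp add: abs_mult of_int_diff[symmetric] del: of_int_diff)
qed

lemma sum_product3:
  fixes f g h :: "'a \<Rightarrow> 'b::comm_semiring_1"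
  shows "sum f A * sum g B * sum h C = (\<Sum>a\<in>A. \<Sum>b\<in>B. \<Sum>c\<in>C. f a * g b * h c)"
proof -
  have "sum f A * sum g B * sum h C = (\<Sum>a\<in>A. f a * (sum g B * sum h C))"
    by (simp add: sum_distrib_right mult.assoc)
  also have "\<dots> = (\<Sum>a\<in>A. \<Sum>b\<in>B. \<Sum>c\<in>C. f a * (g b * h c))"
    unfolding sum_product by (simp only: sum_distrib_left)
  finally show ?thesis by (simp add: mult.assoc)
qed

lemma sum_collisions_time_weight_le:
  fixes a1 a2 a3 :: "int \<Rightarrow> real" and N2 N3 K L :: real
  assumes fin: "finite A1" "finite A2" "finite A3" and "0 < N2"
    and A2: "\<And>n. n \<in> A2 \<Longrightarrow> N2 / 2 \<le> \<bar>real_of_int n\<bar>"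
    and A3: "\<And>n. n \<in> A3 \<Longrightarrow> \<bar>real_of_int n\<bar> \<le> 2 * N3"
    and small: "12 * K + 4 * N3 \<le> N2 / 2"
  defines "h \<equiv> indicator (low_freqs K) :: int \<Rightarrow> real"
  shows "(\<Sum>p\<in>collisions (trilin_freq cj) ((A1 \<times> A2) \<times> A3).
      h (fst (fst (fst p)) - snd (fst (fst p))) * h (fst (fst (snd p)) - snd (fst (snd p)))
      * (a1 (fst (fst (fst p))) * a2 (snd (fst (snd p))) * a3 (snd (fst p)))\<^sup>2
      * time_weight L (of_int (trilin_phase cj (snd p) - trilin_phase cj (fst p))))
    \<le> card (low_freqs K) * (4 * L\<^sup>2 + 16 / (N2 / 2)\<^sup>2)
      * ((\<Sum>n\<in>A1. (a1 n)\<^sup>2) * (\<Sum>n\<in>A2. (a2 n)\<^sup>2) * (\<Sum>n\<in>A3. (a3 n)\<^sup>2))"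
proof -
  define R where "R = low_freqs K"
  define C where "C = 4 * L\<^sup>2 + 16 / (N2 / 2)\<^sup>2"
  define F where "F p = (a1 (fst (fst (fst p))) * a2 (snd (fst (snd p))) * a3 (snd (fst p)))\<^sup>2
      * time_weight L (of_int (trilin_phase cj (snd p) - trilin_phase cj (fst p)))"
    for p :: "((int \<times> int) \<times> int) \<times> ((int \<times> int) \<times> int)"
  have F_nonneg: "0 \<le> F p" for p unfolding F_def using time_weight_nonneg by simp
  have fin_P: "finite (collisions (trilin_freq cj) ((A1 \<times> A2) \<times> A3))"
    using fin by (intro finite_collisions) simp
  have "(\<Sum>p\<in>collisions (trilin_freq cj) ((A1 \<times> A2) \<times> A3).
      h (fst (fst (fst p)) - snd (fst (fst p))) * h (fst (fst (snd p)) - snd (fst (snd p))) * F p)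
    = (\<Sum>p\<in>{p \<in> collisions (trilin_freq cj) ((A1 \<times> A2) \<times> A3).
        fst (fst (fst p)) - snd (fst (fst p)) \<in> R \<and> fst (fst (snd p)) - snd (fst (snd p)) \<in> R}. F p)"
    unfolding sum.inter_filter[OF fin_P] h_def R_def by (intro sum.cong) auto
  also have "\<dots> \<le> (\<Sum>n1\<in>A1. \<Sum>n2\<in>A2. \<Sum>n3\<in>A3. (a1 n1 * a2 n2 * a3 n3)\<^sup>2 * (\<Sum>m\<in>R. \<Sum>m'\<in>R.
      time_weight L (of_int (trilin_phase cj ((n2 + m', n2), n3 + conj_sign cj * (m - m'))
        - trilin_phase cj ((n1, n1 - m), n3)))))"
    using sum_collisions_le_sum_params[where F = F and cj = cj, OF fin finite_low_freqs F_nonneg]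
    unfolding R_def F_def by (simp add: sum_distrib_left)
  also have "\<dots> \<le> (\<Sum>n1\<in>A1. \<Sum>n2\<in>A2. \<Sum>n3\<in>A3. (a1 n1 * a2 n2 * a3 n3)\<^sup>2 * (card R * C))"
  proof (intro sum_mono mult_left_mono)
    fix n1 n2 n3 assume n: "n1 \<in> A1" "n2 \<in> A2" "n3 \<in> A3"
    show "(\<Sum>m\<in>R. \<Sum>m'\<in>R. time_weight L (of_int (trilin_phase cj ((n2 + m', n2), n3 + conj_sign cj * (m - m'))
        - trilin_phase cj ((n1, n1 - m), n3)))) \<le> card R * C"
      unfolding R_def C_def
      by (rule sum_bounded_above, rule sum_time_weight_trilin_phase_le[OF assms(4) A2[OF n(2)] A3[OF n(3)] small])
  qed simp
  also have "\<dots> = (\<Sum>n1\<in>A1. \<Sum>n2\<in>A2. \<Sum>n3\<in>A3. card R * C * ((a1 n1)\<^sup>2 * (a2 n2)\<^sup>2 * (a3 n3)\<^sup>2))"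
    by (simp add: power_mult_distrib mult_ac)
  also have "\<dots> = card R * C * ((\<Sum>n\<in>A1. (a1 n)\<^sup>2) * (\<Sum>n\<in>A2. (a2 n)\<^sup>2) * (\<Sum>n\<in>A3. (a3 n)\<^sup>2))"
    unfolding sum_product3 by (simp only: sum_distrib_left)
  finally show ?thesis unfolding F_def R_def C_def by (simp add: mult_ac)
qed

text \<open>AM-GM with the second modes exchanged: each square then involves the modes
  \<open>n\<^sub>1, n\<^sub>2', n\<^sub>3\<close> that parametrise a collision.\<close>

lemma mult_le_swap_average:
  fixes h a1 a2 a3 :: "int \<Rightarrow> real"
  assumes "\<And>m. 0 \<le> h m"
  shows "(h (n1 - n2) * (a1 n1 * a2 n2 * a3 n3)) * (h (n1' - n2') * (a1 n1' * a2 n2' * a3 n3'))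
    \<le> (h (n1 - n2) * h (n1' - n2') * (a1 n1 * a2 n2' * a3 n3)\<^sup>2
      + h (n1' - n2') * h (n1 - n2) * (a1 n1' * a2 n2 * a3 n3')\<^sup>2) / 2"
proof -
  define u where "u = a1 n1 * a2 n2' * a3 n3"
  define v where "v = a1 n1' * a2 n2 * a3 n3'"
  have "h (n1 - n2) * h (n1' - n2') * (u * v) \<le> h (n1 - n2) * h (n1' - n2') * ((u\<^sup>2 + v\<^sup>2) / 2)"
    using sum_squares_bound[of u v] assms by (intro mult_left_mono) simp_all
  then show ?thesis unfolding u_def v_def by (simp add: algebra_simps)
qed

lemma collision_sum_trilin_le:
  fixes N2 N3 K L M :: real and \<sigma> :: "int \<Rightarrow> complex" and \<eta> :: "real \<Rightarrow> real"
    and cj :: bool and c1 c2 c3 :: "int \<Rightarrow> complex"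
  assumes fin: "finite A1" "finite A2" "finite A3" and "0 < N2" "0 < K"
    and A2: "\<And>n. n \<in> A2 \<Longrightarrow> N2 / 2 \<le> \<bar>real_of_int n\<bar>"
    and A3: "\<And>n. n \<in> A3 \<Longrightarrow> \<bar>real_of_int n\<bar> \<le> 2 * N3"
    and small: "12 * K + 4 * N3 \<le> N2 / 2"
    and \<sigma>: "\<And>m. cmod (\<sigma> m) \<le> M"
    and \<eta>: "\<And>y. 0 \<le> \<eta> y \<and> \<eta> y \<le> 1" "\<And>y. 5/3 < \<bar>y\<bar> \<Longrightarrow> \<eta> y = 0"
  defines "B \<equiv> trilin_coeff \<sigma> \<eta> K cj c1 c2 c3"
  shows "(\<Sum>p\<in>collisions (trilin_freq cj) ((A1 \<times> A2) \<times> A3). cmod (B (fst p)) * cmod (B (snd p))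
        * time_weight L (of_int (trilin_phase cj (snd p) - trilin_phase cj (fst p))))
    \<le> M\<^sup>2 * (card (low_freqs K) * (4 * L\<^sup>2 + 16 / (N2 / 2)\<^sup>2))
      * ((\<Sum>n\<in>A1. (cmod (c1 n))\<^sup>2) * (\<Sum>n\<in>A2. (cmod (c2 n))\<^sup>2) * (\<Sum>n\<in>A3. (cmod (c3 n))\<^sup>2))"
proof -
  define P where "P = collisions (trilin_freq cj) ((A1 \<times> A2) \<times> A3)"
  define h where "h = (indicator (low_freqs K) :: int \<Rightarrow> real)"
  define W where "W p = time_weight L (of_int (trilin_phase cj (snd p) - trilin_phase cj (fst p)))" for p
  define \<beta> where "\<beta> j = h (fst (fst j) - snd (fst j)) * (cmod (c1 (fst (fst j))) * cmod (c2 (snd (fst j))) * cmod (c3 (snd j)))" for j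
  define X where "X p = h (fst (fst (fst p)) - snd (fst (fst p))) * h (fst (fst (snd p)) - snd (fst (snd p)))
      * (cmod (c1 (fst (fst (fst p)))) * cmod (c2 (snd (fst (snd p)))) * cmod (c3 (snd (fst p))))\<^sup>2" for p :: "((int \<times> int) \<times> int) \<times> ((int \<times> int) \<times> int)"
  have M: "0 \<le> M" using order_trans[OF norm_ge_zero \<sigma>] .
  have h: "0 \<le> h m" for m unfolding h_def by simp
  have W: "0 \<le> W p" "W (prod.swap p) = W p" for p
    unfolding W_def using time_weight_nonneg time_weight_minus[of L "of_int (_ - _)"] by (simp_all add: algebra_simps)
  have B_le: "cmod (B j) \<le> M * \<beta> j" for j
  proof -
    obtain n1 n2 n3 where "j = ((n1, n2), n3)" by (metis prod.collapse)
    then show ?thesis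
      using norm_trilin_coeff_le[OF \<sigma> assms(5) \<eta>] unfolding B_def \<beta>_def h_def by simp
  qed
  have "cmod (B (fst p)) * cmod (B (snd p)) * W p \<le> M\<^sup>2 * (\<beta> (fst p) * \<beta> (snd p) * W p)" for p
  proof -
    have "cmod (B (fst p)) * cmod (B (snd p)) \<le> (M * \<beta> (fst p)) * (M * \<beta> (snd p))"
      using B_le order_trans[OF norm_ge_zero B_le] by (intro mult_mono) auto
    from mult_right_mono[OF this W(1)] show ?thesis by (simp add: power2_eq_square mult_ac)
  qed
  then have "(\<Sum>p\<in>P. cmod (B (fst p)) * cmod (B (snd p)) * W p) \<le> (\<Sum>p\<in>P. M\<^sup>2 * (\<beta> (fst p) * \<beta> (snd p) * W p))"
    by (rule sum_mono)
  also have "\<dots> \<le> M\<^sup>2 * (\<Sum>p\<in>P. X p * W p)"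
    unfolding sum_distrib_left[symmetric]
  proof (intro mult_left_mono sum_weighted_le_swap_average W)
    fix p :: "((int \<times> int) \<times> int) \<times> ((int \<times> int) \<times> int)"
    obtain n1 n2 n3 n1' n2' n3' where p: "p = (((n1, n2), n3), ((n1', n2'), n3'))" by (metis prod.collapse)
    show "\<beta> (fst p) * \<beta> (snd p) \<le> (X p + X (prod.swap p)) / 2"
      unfolding \<beta>_def X_def p using mult_le_swap_average[of h] h by simp
  qed (use fin in \<open>simp_all add: P_def finite_collisions swap_in_collisions\<close>)
  also have "\<dots> \<le> M\<^sup>2 * (card (low_freqs K) * (4 * L\<^sup>2 + 16 / (N2 / 2)\<^sup>2)
      * ((\<Sum>n\<in>A1. (cmod (c1 n))\<^sup>2) * (\<Sum>n\<in>A2. (cmod (c2 n))\<^sup>2) * (\<Sum>n\<in>A3. (cmod (c3 n))\<^sup>2)))"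
    unfolding P_def X_def W_def h_def
    by (intro mult_left_mono sum_collisions_time_weight_le[OF fin assms(4) A2 A3 small]) simp_all
  finally show ?thesis unfolding P_def W_def by (simp add: mult_ac)
qed

lemma dyadic_ge_one: "dyadic N \<Longrightarrow> 1 \<le> N"
  unfolding dyadic_def by auto

lemma finite_annulus: "finite (annulus N)"
proof -
  have "annulus N \<subseteq> {-\<lceil>2*N\<rceil>..\<lceil>2*N\<rceil>}"
    unfolding annulus_def by (auto split: if_splits simp: abs_le_iff le_ceiling_iff ceiling_le_iff) linarith+
  then show ?thesis by (rule finite_subset) simp
qed

lemma annulus_upper: "n \<in> annulus N \<Longrightarrow> 1 \<le> N \<Longrightarrow> \<bar>real_of_int n\<bar> \<le> 2 * N"
  unfolding annulus_def by (auto split: if_splits)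

lemma annulus_lower: "n \<in> annulus N \<Longrightarrow> N \<noteq> 1 \<Longrightarrow> N / 2 \<le> \<bar>real_of_int n\<bar>"
  unfolding annulus_def by (auto split: if_splits)

lemma cutoff_range:
  fixes \<eta> :: "real \<Rightarrow> real"
  assumes "\<forall>x. indicator {-4/3..4/3} x \<le> \<eta> x \<and> \<eta> x \<le> indicator {-5/3..5/3} x"
  shows "0 \<le> \<eta> y \<and> \<eta> y \<le> 1"
proof -
  have "indicator {-4/3..4/3} y \<le> \<eta> y" "\<eta> y \<le> indicator {-5/3..5/3} y" using assms by auto
  moreover have "0 \<le> (indicator {-4/3..4/3} y :: real)" "(indicator {-5/3..5/3} y :: real) \<le> 1"
    by (auto simp: indicator_def)
  ultimately show ?thesis by linarith
qed

lemma cutoff_vanish: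
  fixes \<eta> :: "real \<Rightarrow> real"
  assumes "\<forall>x. indicator {-4/3..4/3} x \<le> \<eta> x \<and> \<eta> x \<le> indicator {-5/3..5/3} x"
    and "5/3 < \<bar>y\<bar>"
  shows "\<eta> y = 0"
proof -
  have "y \<notin> {-5/3..5/3}" using assms(2) by auto
  then have "(indicator {-5/3..5/3} y :: real) = 0" by simp
  then show ?thesis using assms(1) cutoff_range[OF assms(1), of y] by (metis order_antisym)
qed

lemma scale_separation:
  fixes A N1 N2 N3 K :: real
  assumes "1 \<le> A" "0 \<le> N3" "0 \<le> K"
    and "N1 \<le> A * N2" "64 * A * N3 \<le> N1" "64 * A * K \<le> N1"
  shows "12 * K + 4 * N3 \<le> N2 / 2"
proof -
  have "A * (64 * (12 * K + 4 * N3)) \<le> A * (16 * N2)" using assms(4-6) by (simp add: algebra_simps)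
  then have "768 * K + 256 * N3 \<le> 16 * N2" using assms(1) by (simp add: mult_le_cancel_left_pos)
  then show ?thesis using assms(2,3) by linarith
qed

lemma low_freqs_weight_le:
  fixes A B N1 N2 K :: real
  assumes "1 \<le> K" "0 < N1" "0 < N2" "N1 \<le> A * N2"
  shows "card (low_freqs K) * (4 * (B / N1)\<^sup>2 + 16 / (N2 / 2)\<^sup>2) \<le> 5 * K * ((4 * B\<^sup>2 + 64 * A\<^sup>2) / N1\<^sup>2)"
proof (rule mult_mono[OF card_low_freqs_le[OF assms(1)]])
  have "N1\<^sup>2 \<le> (A * N2)\<^sup>2" using assms by (intro power_mono) auto
  then have "64 / N2\<^sup>2 \<le> 64 * A\<^sup>2 / N1\<^sup>2" using assms by (simp add: field_simps power_mult_distrib)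
  then show "4 * (B / N1)\<^sup>2 + 16 / (N2 / 2)\<^sup>2 \<le> (4 * B\<^sup>2 + 64 * A\<^sup>2) / N1\<^sup>2"
    by (simp add: power_divide add_divide_distrib)
qed (use assms in auto)

definition trilin_const :: "real \<Rightarrow> real \<Rightarrow> real" where
  "trilin_const A B = 5 * (4 * B\<^sup>2 + 64 * A\<^sup>2) / B"

lemma trilin_energy_le:
  fixes A B N1 N2 N3 K \<delta> M :: real
  assumes A: "1 \<le> A" and B: "0 < B"
    and \<eta>: "\<And>y. 0 \<le> \<eta> y \<and> \<eta> y \<le> 1" "\<And>y. 5/3 < \<bar>y\<bar> \<Longrightarrow> \<eta> y = 0"
    and dyadic: "dyadic N1" "dyadic N2" "dyadic N3" "dyadic K"
    and N12: "N1 \<le> A * N2" and N3: "64 * A * N3 \<le> N1" and K: "64 * A * K \<le> N1"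
    and \<delta>: "0 < \<delta>" "\<delta> \<le> B / N1"
    and supp: "\<forall>n. n \<notin> annulus N1 \<longrightarrow> c1 n = 0" "\<forall>n. n \<notin> annulus N2 \<longrightarrow> c2 n = 0"
      "\<forall>n. n \<notin> annulus N3 \<longrightarrow> c3 n = 0"
    and \<sigma>: "\<And>m. cmod (\<sigma> m) \<le> M"
  shows "integral {0..\<delta>} (\<lambda>t. integral {0..2*pi} (\<lambda>x. (cmod (trilin \<sigma> \<eta> K cj c1 c2 c3 t x))\<^sup>2))
    \<le> 2 * pi * trilin_const A B * M\<^sup>2 * (K / N1)
      * ((\<Sum>n\<in>annulus N1. (cmod (c1 n))\<^sup>2) * (\<Sum>n\<in>annulus N2. (cmod (c2 n))\<^sup>2) * (\<Sum>n\<in>annulus N3. (cmod (c3 n))\<^sup>2))"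
proof -
  have N: "1 \<le> N1" "1 \<le> N2" "1 \<le> N3" "1 \<le> K" using dyadic by (simp_all add: dyadic_ge_one)
  define L where "L = B / N1"
  have L: "0 < L" unfolding L_def using B N by simp
  have small: "12 * K + 4 * N3 \<le> N2 / 2" using scale_separation[OF A _ _ N12 N3 K] N by simp
  then have "N2 \<noteq> 1" using N by auto
  then have A2: "\<And>n. n \<in> annulus N2 \<Longrightarrow> N2 / 2 \<le> \<bar>real_of_int n\<bar>" using annulus_lower by blast
  have A3: "\<And>n. n \<in> annulus N3 \<Longrightarrow> \<bar>real_of_int n\<bar> \<le> 2 * N3" using annulus_upper N(3) by blast
  define PP where "PP = (\<Sum>n\<in>annulus N1. (cmod (c1 n))\<^sup>2) * (\<Sum>n\<in>annulus N2. (cmod (c2 n))\<^sup>2)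
      * (\<Sum>n\<in>annulus N3. (cmod (c3 n))\<^sup>2)"
  have PP: "0 \<le> PP" unfolding PP_def by (intro mult_nonneg_nonneg sum_nonneg) auto
  define S where "S = (\<Sum>p\<in>collisions (trilin_freq cj) ((annulus N1 \<times> annulus N2) \<times> annulus N3).
      cmod (trilin_coeff \<sigma> \<eta> K cj c1 c2 c3 (fst p)) * cmod (trilin_coeff \<sigma> \<eta> K cj c1 c2 c3 (snd p))
      * time_weight L (of_int (trilin_phase cj (snd p) - trilin_phase cj (fst p))))"
  have "S \<le> M\<^sup>2 * (card (low_freqs K) * (4 * L\<^sup>2 + 16 / (N2 / 2)\<^sup>2)) * PP"
    unfolding S_def PP_def
    by (rule collision_sum_trilin_le[OF finite_annulus finite_annulus finite_annulus _ _ A2 A3 small \<sigma> \<eta>])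
       (use N in auto)
  also have "\<dots> \<le> M\<^sup>2 * (5 * K * ((4 * B\<^sup>2 + 64 * A\<^sup>2) / N1\<^sup>2)) * PP"
    using low_freqs_weight_le[OF N(4) _ _ N12, of B] N PP unfolding L_def
    by (intro mult_right_mono mult_left_mono) auto
  finally have S_le: "S \<le> M\<^sup>2 * (5 * K * ((4 * B\<^sup>2 + 64 * A\<^sup>2) / N1\<^sup>2)) * PP" .
  have "integral {0..\<delta>} (\<lambda>t. integral {0..2*pi} (\<lambda>x. (cmod (trilin \<sigma> \<eta> K cj c1 c2 c3 t x))\<^sup>2))
      \<le> 2 * pi / L * S"
    unfolding S_def
    by (rule integral_norm_trilin_squared_le[OF finite_annulus finite_annulus finite_annulus supp \<delta>(1)])
       (simp add: L_def \<delta>(2))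
  also have "\<dots> \<le> 2 * pi / L * (M\<^sup>2 * (5 * K * ((4 * B\<^sup>2 + 64 * A\<^sup>2) / N1\<^sup>2)) * PP)"
    using S_le L by (intro mult_left_mono) auto
  also have "\<dots> = 2 * pi * trilin_const A B * M\<^sup>2 * (K / N1) * PP"
    unfolding L_def trilin_const_def using N B by (simp add: field_simps power2_eq_square)
  finally show ?thesis unfolding PP_def .
qed

lemma l2l2_trilin_le:
  fixes A B N1 N2 N3 K \<delta> M :: real
  assumes A: "1 \<le> A" and B: "0 < B"
    and \<eta>: "\<And>y. 0 \<le> \<eta> y \<and> \<eta> y \<le> 1" "\<And>y. 5/3 < \<bar>y\<bar> \<Longrightarrow> \<eta> y = 0"
    and dyadic: "dyadic N1" "dyadic N2" "dyadic N3" "dyadic K"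
    and N12: "N1 \<le> A * N2" and N3: "64 * A * N3 \<le> N1" and K: "64 * A * K \<le> N1"
    and \<delta>: "0 < \<delta>" "\<delta> \<le> B / N1"
    and supp: "\<forall>n. n \<notin> annulus N1 \<longrightarrow> c1 n = 0" "\<forall>n. n \<notin> annulus N2 \<longrightarrow> c2 n = 0"
      "\<forall>n. n \<notin> annulus N3 \<longrightarrow> c3 n = 0"
    and \<sigma>: "\<And>m. cmod (\<sigma> m) \<le> M"
  shows "l2l2 \<delta> (trilin \<sigma> \<eta> K cj c1 c2 c3)
    \<le> sqrt (trilin_const A B) / (2 * pi) * M * sqrt (K / N1)
      * l2T (trig_poly c1) * l2T (trig_poly c2) * l2T (trig_poly c3)"
proof -
  define S1 where "S1 = (\<Sum>n\<in>annulus N1. (cmod (c1 n))\<^sup>2)"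
  define S2 where "S2 = (\<Sum>n\<in>annulus N2. (cmod (c2 n))\<^sup>2)"
  define S3 where "S3 = (\<Sum>n\<in>annulus N3. (cmod (c3 n))\<^sup>2)"
  have S: "0 \<le> S1" "0 \<le> S2" "0 \<le> S3" unfolding S1_def S2_def S3_def by (simp_all add: sum_nonneg)
  have M: "0 \<le> M" using order_trans[OF norm_ge_zero \<sigma>] .
  have N: "0 < N1" "0 \<le> K" using dyadic_ge_one[OF dyadic(1)] dyadic_ge_one[OF dyadic(4)] by simp_all
  have Q: "0 \<le> trilin_const A B" unfolding trilin_const_def using B by simp
  have "(sqrt (trilin_const A B) / (2 * pi) * M * sqrt (K / N1)
      * sqrt (2 * pi * S1) * sqrt (2 * pi * S2) * sqrt (2 * pi * S3))\<^sup>2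
    = 2 * pi * trilin_const A B * M\<^sup>2 * (K / N1) * (S1 * S2 * S3)"
    using S N Q by (simp add: power_mult_distrib power_divide power2_eq_square field_simps)
  then have "integral {0..\<delta>} (\<lambda>t. integral {0..2*pi} (\<lambda>x. (cmod (trilin \<sigma> \<eta> K cj c1 c2 c3 t x))\<^sup>2))
    \<le> (sqrt (trilin_const A B) / (2 * pi) * M * sqrt (K / N1)
      * sqrt (2 * pi * S1) * sqrt (2 * pi * S2) * sqrt (2 * pi * S3))\<^sup>2"
    unfolding S1_def S2_def S3_def
    using trilin_energy_le[OF A B \<eta> dyadic N12 N3 K \<delta> supp \<sigma>] by simp
  then show ?thesis
    unfolding l2l2_def l2T_trig_poly[OF finite_annulus supp(1)] l2T_trig_poly[OF finite_annulus supp(2)]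
      l2T_trig_poly[OF finite_annulus supp(3)] S1_def[symmetric] S2_def[symmetric] S3_def[symmetric]
    using S M N Q by (intro real_le_lsqrt) simp_all
qed

theorem lemma2p10:
  fixes \<eta> :: "real \<Rightarrow> real"
  assumes smooth: "\<forall>k x. ((deriv ^^ k) \<eta>) differentiable (at x)"
    and even: "\<forall>x. \<eta> (- x) = \<eta> x"
    and mono: "mono_on {0..} \<eta> \<or> antimono_on {0..} \<eta>"
    and bounds: "\<forall>x. indicator {-4/3..4/3} x \<le> \<eta> x \<and> \<eta> x \<le> indicator {-5/3..5/3} x"
  shows "\<forall>A B. 1 \<le> A \<and> 0 < B \<longrightarrow>
    (\<exists>C0 C. 0 < C0 \<and> 0 < C \<and>
      (\<forall>N1 N2 N3 K \<delta> c1 c2 c3.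
         dyadic N1 \<and> dyadic N2 \<and> dyadic N3 \<and> dyadic K \<and>
         N1 \<le> A * N2 \<and> N2 \<le> A * N1 \<and> C0 * N3 \<le> N1 \<and> C0 * K \<le> N1 \<and>
         0 < \<delta> \<and> \<delta> \<le> B / N1 \<and>
         (\<forall>n. n \<notin> annulus N1 \<longrightarrow> c1 n = 0) \<and>
         (\<forall>n. n \<notin> annulus N2 \<longrightarrow> c2 n = 0) \<and>
         (\<forall>n. n \<notin> annulus N3 \<longrightarrow> c3 n = 0) \<longrightarrow>
         l2l2 \<delta> (trilin hilbert_symbol \<eta> K False c1 c2 c3)
           \<le> C * sqrt (K / N1) * l2T (trig_poly c1) * l2T (trig_poly c2) * l2T (trig_poly c3) \<and>
         l2l2 \<delta> (trilin hilbert_symbol \<eta> K True c1 c2 c3)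
           \<le> C * sqrt (K / N1) * l2T (trig_poly c1) * l2T (trig_poly c2) * l2T (trig_poly c3) \<and>
         (\<forall>\<sigma> M. (\<forall>m. cmod (\<sigma> m) \<le> M) \<longrightarrow>
           (\<forall>cj. l2l2 \<delta> (trilin \<sigma> \<eta> K cj c1 c2 c3)
             \<le> C * M * sqrt (K / N1) * l2T (trig_poly c1) * l2T (trig_poly c2) * l2T (trig_poly c3)))))"
proof (intro allI impI, goal_cases)
  case (1 A B)
  then have A: "1 \<le> A" and B: "0 < B" by auto
  define C where "C = sqrt (trilin_const A B) / (2 * pi)"
  have C: "0 < C" unfolding C_def trilin_const_def using B by (simp add: add_pos_nonneg)
  have hilbert: "cmod (hilbert_symbol m) \<le> 1" for m
    unfolding hilbert_symbol_def by (simp add: norm_mult sgn_if)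
  have estimate: "l2l2 \<delta> (trilin \<sigma> \<eta> K cj c1 c2 c3)
      \<le> C * M * sqrt (K / N1) * l2T (trig_poly c1) * l2T (trig_poly c2) * l2T (trig_poly c3)"
    if "dyadic N1 \<and> dyadic N2 \<and> dyadic N3 \<and> dyadic K \<and>
         N1 \<le> A * N2 \<and> N2 \<le> A * N1 \<and> 64 * A * N3 \<le> N1 \<and> 64 * A * K \<le> N1 \<and> 0 < \<delta> \<and> \<delta> \<le> B / N1 \<and>
         (\<forall>n. n \<notin> annulus N1 \<longrightarrow> c1 n = 0) \<and> (\<forall>n. n \<notin> annulus N2 \<longrightarrow> c2 n = 0) \<and>
         (\<forall>n. n \<notin> annulus N3 \<longrightarrow> c3 n = 0)"
      and "\<forall>m. cmod (\<sigma> m) \<le> M"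
    for N1 N2 N3 K \<delta> c1 c2 c3 \<sigma> M cj
    unfolding C_def using that
    by (intro l2l2_trilin_le[where \<eta> = \<eta>, OF A B cutoff_range[OF bounds] cutoff_vanish[OF bounds], of N1 N2 N3 K]) auto
  show ?case
    using A C estimate estimate[where \<sigma> = hilbert_symbol and M = 1] hilbert
    by (intro exI[of _ "64 * A"] exI[of _ C] conjI allI impI) simp_all
qed

end
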